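(* For each integer $p\ge 2$ there is a constant $C_p>0$ such that for arbitrarily large $n$ (i.e. for infinitely many positive integers $n$) there exists a $(p-1)$-dimensional simplicial complex $\Gamma$ with $n$ vertices satisfying $\mathrm{gr}_{p-1}(\Gamma)>2p$ and $f_{p-1}(\Gamma)\ge C_p\,n^{\,p-\frac{p}{2^p-1}}$.
   Context: A simplicial complex $\Gamma$ on a finite vertex set $V=V(\Gamma)$ is a family of subsets of $V$ (faces) closed under taking subsets; its dimension is $\max\{|F|:F\in\Gamma\}-1$; $f_j(\Gamma)$ is the number of faces with $j+1$ elements. For $W\subseteq V$, $\Gamma[W]=\{F\in\Gamma:F\subseteq W\}$; for a face $F$ (possibly empty), $\mathrm{lk}_\Gamma(F)=\{G\setminus F: F\subseteq G\in\Gamma\}$. Fix a field $\mathbf{k}$; $\tilde H_j(\cdot;\mathbf{k})$ is reduced simplicial homology. The $(p-1)$-girth is $\mathrm{gr}_{p-1}(\Gamma)=\min\{|W|: W\subseteq V(\Gamma),\ \tilde H_{p-1}(\mathrm{lk}_\Gamma(F)[W];\mathbf{k})\neq 0 \text{ for some face } F\in\Gamma \text{ (including } F=\emptyset)\}$, or $\infty$ if none exists. *)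

theory Defs
  imports Main "HOL-Library.Extended_Nat"
begin

definition simplicial_complex :: "nat set set \<Rightarrow> bool" where
  "simplicial_complex \<Gamma> \<longleftrightarrow> finite \<Gamma> \<and> (\<forall>F\<in>\<Gamma>. finite F) \<and> (\<forall>F\<in>\<Gamma>. \<forall>G. G \<subseteq> F \<longrightarrow> G \<in> \<Gamma>)"

definition verts :: "nat set set \<Rightarrow> nat set" where
  "verts \<Gamma> = \<Union>\<Gamma>"

text \<open>Number of faces with exactly k elements, so f_j = num_faces \<Gamma> (j+1).\<close>
definition num_faces :: "nat set set \<Rightarrow> nat \<Rightarrow> nat" where
  "num_faces \<Gamma> k = card {F \<in> \<Gamma>. card F = k}"

definition has_dim :: "nat set set \<Rightarrow> nat \<Rightarrow> bool" where
  "has_dim \<Gamma> d \<longleftrightarrow> (\<forall>F\<in>\<Gamma>. card F \<le> d + 1) \<and> (\<exists>F\<in>\<Gamma>. card F = d + 1)"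

definition induced :: "nat set set \<Rightarrow> nat set \<Rightarrow> nat set set" where
  "induced \<Gamma> W = {F \<in> \<Gamma>. F \<subseteq> W}"

definition link :: "nat set set \<Rightarrow> nat set \<Rightarrow> nat set set" where
  "link \<Gamma> F = {G - F | G. G \<in> \<Gamma> \<and> F \<subseteq> G}"

text \<open>Simplicial chains with coefficients in the field 'k: a j-chain is a function on
faces supported on the faces with j+1 elements; faces are oriented by the natural
order of the vertices. Boundary map (augmented, so that homology is reduced):
the coefficient of the face G (|G| = j) in the boundary of a j-chain c is
sum over v with G \<union> {v} a face of (-1)^(position of v in G \<union> {v}) * c(G \<union> {v}).\<close>

definition is_chain :: "'k::field itself \<Rightarrow> nat set set \<Rightarrow> nat \<Rightarrow> (nat set \<Rightarrow> 'k) \<Rightarrow> bool" where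
  "is_chain _ \<Gamma> j c \<longleftrightarrow> (\<forall>F. c F \<noteq> 0 \<longrightarrow> F \<in> \<Gamma> \<and> card F = j + 1)"

definition bdry :: "nat set set \<Rightarrow> (nat set \<Rightarrow> 'k::field) \<Rightarrow> nat set \<Rightarrow> 'k" where
  "bdry \<Gamma> c G = (\<Sum>v \<in> {v. v \<notin> G \<and> insert v G \<in> \<Gamma>}.
       (-1) ^ card {u \<in> G. u < v} * c (insert v G))"

definition red_homology_nonzero :: "'k::field itself \<Rightarrow> nat set set \<Rightarrow> nat \<Rightarrow> bool" where
  "red_homology_nonzero K \<Gamma> j \<longleftrightarrow>
     (\<exists>c :: nat set \<Rightarrow> 'k. is_chain K \<Gamma> j c
        \<and> (\<forall>G. card G = j \<longrightarrow> bdry \<Gamma> c G = 0)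
        \<and> \<not> (\<exists>b :: nat set \<Rightarrow> 'k. is_chain K \<Gamma> (Suc j) b
               \<and> (\<forall>G. card G = j + 1 \<longrightarrow> c G = bdry \<Gamma> b G)))"

definition girth :: "'k::field itself \<Rightarrow> nat set set \<Rightarrow> nat \<Rightarrow> enat" where
  "girth K \<Gamma> j =
     (if \<exists>W. W \<subseteq> verts \<Gamma> \<and> (\<exists>F\<in>\<Gamma>. red_homology_nonzero K (induced (link \<Gamma> F) W) j)
      then enat (LEAST m. \<exists>W. W \<subseteq> verts \<Gamma> \<and> card W = m \<and>
                   (\<exists>F\<in>\<Gamma>. red_homology_nonzero K (induced (link \<Gamma> F) W) j))
      else \<infinity>)"

end

theory Submission
  imports Defs "HOL-Library.FuncSet"
begin

text \<open>
  Vertices are the numbers below p*m; the number x*p + i is the vertex of colour i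
  and value x. A point f of the grid [m]^p determines the "colourful" facet
  {f i * p + i | i < p}, and a set E of grid points determines the p-partite complex
  generated by these facets (plus all vertices). The argument has three parts:
  (1) Probabilistic alteration, done as a finite weighted average: some E avoiding every
      combinatorial box {a i, b i}^p (a i < b i) has at least q m^p - m^(2p) q^(2^p) points.
  (2) Homology: a (p-1)-cycle of the complex on at most 2p vertices is zero, because its
      support is closed under changing one coordinate, hence fills a whole box; links of
      nonempty faces have no (p-1)-faces at all. So the (p-1)-girth exceeds 2p.
  (3) Arithmetic: with m = t^(2^p-1) and q = 1/(2 t^p) the bound in (1) is at least
      m^p/(4 t^p), which dominates n^(p - p/(2^p-1)) / (4 p^p) for n = p*m.
\<close>

text \<open>Probability that a random subset of U, containing each element independently with
  probability q, equals E. We only use it as a weight, so no measure theory is needed.\<close>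

definition binomial_weight :: "real \<Rightarrow> 'a set \<Rightarrow> 'a set \<Rightarrow> real" where
  "binomial_weight q U E = q ^ card E * (1 - q) ^ card (U - E)"

lemma binomial_weight_nonneg:
  "0 \<le> q \<Longrightarrow> q \<le> 1 \<Longrightarrow> 0 \<le> binomial_weight q U E"
  by (simp add: binomial_weight_def)

text \<open>The probability that the random subset contains a fixed A is q^|A|: expand the product
  of the factors q + (1 - q) over U.\<close>

lemma binomial_weight_supersets:
  assumes "finite U" "A \<subseteq> U"
  shows "(\<Sum>E\<in>Pow U. if A \<subseteq> E then binomial_weight q U E else 0) = q ^ card A"
proof -
  define r where "r x = (if x \<in> A then 0 else 1 - q)" for x
  have "q ^ card A = (\<Prod>x\<in>U. if x \<in> A then q else 1)"
    using prod.inter_restrict[OF assms(1), of "\<lambda>_. q" A] assms(2)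
    by (simp add: Int_absorb1)
  also have "\<dots> = (\<Prod>x\<in>U. q + r x)"
    by (rule prod.cong) (auto simp: r_def)
  also have "\<dots> = (\<Sum>E\<in>Pow U. (\<Prod>x\<in>E. q) * (\<Prod>x\<in>U - E. r x))"
    by (rule prod_add[OF assms(1)])
  also have "\<dots> = (\<Sum>E\<in>Pow U. if A \<subseteq> E then binomial_weight q U E else 0)"
  proof (rule sum.cong)
    fix E assume "E \<in> Pow U"
    show "(\<Prod>x\<in>E. q) * (\<Prod>x\<in>U - E. r x) = (if A \<subseteq> E then binomial_weight q U E else 0)"
    proof (cases "A \<subseteq> E")
      case True
      then have "(\<Prod>x\<in>U - E. r x) = (\<Prod>x\<in>U - E. 1 - q)"
        by (intro prod.cong) (auto simp: r_def)
      then show ?thesis using True by (simp add: binomial_weight_def)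
    next
      case False
      then obtain y where "y \<in> A" "y \<notin> E" by auto
      then have "(\<Prod>x\<in>U - E. r x) = 0"
        using assms by (intro prod_zero) (auto simp: r_def)
      then show ?thesis using False by simp
    qed
  qed simp
  finally show ?thesis ..
qed

lemma expected_containment_count:
  assumes "finite U" "finite P" "\<And>x. x \<in> P \<Longrightarrow> B x \<subseteq> U"
  shows "(\<Sum>E\<in>Pow U. binomial_weight q U E * real (card {x\<in>P. B x \<subseteq> E}))
       = (\<Sum>x\<in>P. q ^ card (B x))"
proof -
  have "(\<Sum>E\<in>Pow U. binomial_weight q U E * real (card {x\<in>P. B x \<subseteq> E}))
      = (\<Sum>E\<in>Pow U. \<Sum>x\<in>P. if B x \<subseteq> E then binomial_weight q U E else 0)"
    using sum.inter_filter[OF assms(2), of "\<lambda>_. 1::real"]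
    by (simp add: sum_distrib_left if_distrib cong: if_cong)
  also have "\<dots> = (\<Sum>x\<in>P. \<Sum>E\<in>Pow U. if B x \<subseteq> E then binomial_weight q U E else 0)"
    by (rule sum.swap)
  also have "\<dots> = (\<Sum>x\<in>P. q ^ card (B x))"
    using binomial_weight_supersets[OF assms(1) assms(3)] by simp
  finally show ?thesis .
qed

lemma exists_ge_weighted_average:
  fixes w f :: "'a \<Rightarrow> real"
  assumes "finite I" "I \<noteq> {}" "\<And>i. i \<in> I \<Longrightarrow> 0 \<le> w i" "(\<Sum>i\<in>I. w i) = 1"
  shows "\<exists>i\<in>I. (\<Sum>j\<in>I. w j * f j) \<le> f i"
proof -
  have "Max (f ` I) \<in> f ` I"
    using assms(1,2) by (intro Max_in) auto
  then obtain i where i: "i \<in> I" "f i = Max (f ` I)"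
    by (metis imageE)
  have "(\<Sum>j\<in>I. w j * f j) \<le> (\<Sum>j\<in>I. w j * f i)"
    using assms(1,3) i(2) by (intro sum_mono mult_left_mono) auto
  also have "\<dots> = f i"
    using assms(4) by (simp add: sum_distrib_right[symmetric])
  finally show ?thesis using i(1) by blast
qed

lemma exists_subset_few_contained:
  fixes q :: real
  assumes U: "finite U" and P: "finite P" and q: "0 \<le> q" "q \<le> 1"
    and B: "\<And>x. x \<in> P \<Longrightarrow> B x \<subseteq> U"
  shows "\<exists>E\<subseteq>U. q * real (card U) - (\<Sum>x\<in>P. q ^ card (B x))
                  \<le> real (card E) - real (card {x\<in>P. B x \<subseteq> E})"
proof -
  let ?w = "binomial_weight q U"
  let ?X = "\<lambda>E. real (card E) - real (card {x\<in>P. B x \<subseteq> E})"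
  have total: "(\<Sum>E\<in>Pow U. ?w E) = 1"
    using binomial_weight_supersets[OF U empty_subsetI, of q] by simp
  have "(\<Sum>E\<in>Pow U. ?w E * real (card E))
      = (\<Sum>E\<in>Pow U. ?w E * real (card {u\<in>U. {u} \<subseteq> E}))"
  proof (rule sum.cong)
    fix E assume "E \<in> Pow U"
    then have "{u\<in>U. {u} \<subseteq> E} = E" by auto
    then show "?w E * real (card E) = ?w E * real (card {u\<in>U. {u} \<subseteq> E})" by simp
  qed simp
  also have "\<dots> = q * real (card U)"
    using expected_containment_count[OF U U, of "\<lambda>u. {u}" q] by simp
  finally have size: "(\<Sum>E\<in>Pow U. ?w E * real (card E)) = q * real (card U)" .
  have count: "(\<Sum>E\<in>Pow U. ?w E * real (card {x\<in>P. B x \<subseteq> E})) = (\<Sum>x\<in>P. q ^ card (B x))"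
    by (rule expected_containment_count[OF U P B])
  have "(\<Sum>E\<in>Pow U. ?w E * ?X E) = q * real (card U) - (\<Sum>x\<in>P. q ^ card (B x))"
    using size count by (simp add: right_diff_distrib sum_subtractf)
  moreover have "\<exists>E\<in>Pow U. (\<Sum>E\<in>Pow U. ?w E * ?X E) \<le> ?X E"
    using U q by (intro exists_ge_weighted_average total binomial_weight_nonneg) auto
  ultimately show ?thesis by auto
qed

text \<open>Alteration method: deleting one point from each member of the family contained in the set
  above yields a set containing no member of the family, losing at most one point per member.\<close>

lemma alteration:
  fixes q :: real
  assumes U: "finite U" and P: "finite P" and q: "0 \<le> q" "q \<le> 1"
    and B: "\<And>x. x \<in> P \<Longrightarrow> B x \<subseteq> U" "\<And>x. x \<in> P \<Longrightarrow> card (B x) = s" and s: "s \<ge> 1"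
  shows "\<exists>E\<subseteq>U. (\<forall>x\<in>P. \<not> B x \<subseteq> E) \<and> q * real (card U) - real (card P) * q ^ s \<le> real (card E)"
proof -
  obtain E where E: "E \<subseteq> U"
    and big: "q * real (card U) - (\<Sum>x\<in>P. q ^ card (B x))
                \<le> real (card E) - real (card {x\<in>P. B x \<subseteq> E})"
    using exists_subset_few_contained[of U P q B, OF U P q B(1)] by blast
  define Q where "Q = {x\<in>P. B x \<subseteq> E}"
  define pick where "pick x = (SOME y. y \<in> B x)" for x
  have pick: "pick x \<in> B x" if "x \<in> P" for x
  proof -
    have "B x \<noteq> {}" using B(2)[OF that] s by auto
    then show ?thesis unfolding pick_def by (simp add: some_in_eq)
  qed
  define E' where "E' = E - pick ` Q"
  have fin: "finite E'" "finite Q"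
    using E U P by (auto simp: E'_def Q_def intro: finite_subset)
  have "card E \<le> card (E' \<union> pick ` Q)"
    using fin by (intro card_mono) (auto simp: E'_def)
  also have "\<dots> \<le> card E' + card (pick ` Q)"
    by (rule card_Un_le)
  also have "\<dots> \<le> card E' + card Q"
    using fin by (intro add_left_mono card_image_le)
  finally have "real (card E) - real (card Q) \<le> real (card E')" by simp
  moreover have "(\<Sum>x\<in>P. q ^ card (B x)) = real (card P) * q ^ s"
    using B(2) by simp
  ultimately have "q * real (card U) - real (card P) * q ^ s \<le> real (card E')"
    using big unfolding Q_def by linarith
  moreover have "\<not> B x \<subseteq> E'" if "x \<in> P" for x
  proof
    assume "B x \<subseteq> E'"
    then have "x \<in> Q" using that by (auto simp: E'_def Q_def)
    then show False using pick[OF that] \<open>B x \<subseteq> E'\<close> by (auto simp: E'_def)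
  qed
  moreover have "E' \<subseteq> U" using E by (auto simp: E'_def)
  ultimately show ?thesis by blast
qed

definition grid :: "nat \<Rightarrow> nat \<Rightarrow> (nat \<Rightarrow> nat) set" where
  "grid p m = PiE {..<p} (\<lambda>_. {..<m})"

definition box :: "nat \<Rightarrow> (nat \<Rightarrow> nat) \<Rightarrow> (nat \<Rightarrow> nat) \<Rightarrow> (nat \<Rightarrow> nat) set" where
  "box p a b = PiE {..<p} (\<lambda>i. {a i, b i})"

definition box_corners :: "nat \<Rightarrow> nat \<Rightarrow> ((nat \<Rightarrow> nat) \<times> (nat \<Rightarrow> nat)) set" where
  "box_corners p m = {(a, b). a \<in> grid p m \<and> b \<in> grid p m \<and> (\<forall>i<p. a i < b i)}"

lemma finite_grid: "finite (grid p m)"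
  by (simp add: grid_def finite_PiE)

lemma card_grid: "card (grid p m) = m ^ p"
  by (simp add: grid_def card_PiE)

lemma grid_undefined: "f \<in> grid p m \<Longrightarrow> \<not> i < p \<Longrightarrow> f i = undefined"
  by (auto simp: grid_def PiE_def extensional_def)

lemma card_box:
  assumes "\<forall>i<p. a i \<noteq> b i"
  shows "card (box p a b) = 2 ^ p"
proof -
  have "card (box p a b) = (\<Prod>i<p. card {a i, b i})"
    by (simp add: box_def card_PiE)
  also have "\<dots> = (\<Prod>i<p. 2)"
    using assms by (intro prod.cong) auto
  finally show ?thesis by simp
qed

lemma box_subset_grid:
  assumes "(a, b) \<in> box_corners p m"
  shows "box p a b \<subseteq> grid p m"
  using assms unfolding box_corners_def box_def grid_def by (auto simp: PiE_iff) (metis lessThan_iff)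

lemma finite_box_corners: "finite (box_corners p m)"
  by (rule finite_subset[of _ "grid p m \<times> grid p m"]) (auto simp: box_corners_def finite_grid)

lemma card_box_corners: "card (box_corners p m) \<le> m ^ (2 * p)"
proof -
  have "card (box_corners p m) \<le> card (grid p m \<times> grid p m)"
    by (intro card_mono) (auto simp: box_corners_def finite_grid)
  also have "\<dots> = m ^ (2 * p)"
    by (simp add: card_cartesian_product card_grid mult_2 power_add)
  finally show ?thesis .
qed

lemma box_free_subset_exists:
  fixes q :: real
  assumes "0 \<le> q" "q \<le> 1"
  shows "\<exists>E\<subseteq>grid p m. (\<forall>(a, b)\<in>box_corners p m. \<not> box p a b \<subseteq> E)
           \<and> q * real m ^ p - real m ^ (2 * p) * q ^ (2 ^ p) \<le> real (card E)"
proof -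
  have sub: "case_prod (box p) x \<subseteq> grid p m" if "x \<in> box_corners p m" for x
    using box_subset_grid that by (cases x) auto
  have card: "card (case_prod (box p) x) = 2 ^ p" if "x \<in> box_corners p m" for x
    using that by (auto simp: box_corners_def intro!: card_box)
  obtain E where E: "E \<subseteq> grid p m" "\<forall>x\<in>box_corners p m. \<not> case_prod (box p) x \<subseteq> E"
    and big: "q * real (card (grid p m)) - real (card (box_corners p m)) * q ^ (2 ^ p) \<le> real (card E)"
    using alteration[of "grid p m" "box_corners p m" q "case_prod (box p)" "2 ^ p",
        OF finite_grid finite_box_corners assms sub card]
    by (metis one_le_numeral one_le_power)
  have "real (card (box_corners p m)) * q ^ (2 ^ p) \<le> real m ^ (2 * p) * q ^ (2 ^ p)"
    using card_box_corners[of p m] assms by (intro mult_right_mono) (simp_all flip: of_nat_power)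
  then have "q * real m ^ p - real m ^ (2 * p) * q ^ (2 ^ p) \<le> real (card E)"
    using big by (simp add: card_grid)
  then show ?thesis using E by (intro exI[of _ E]) auto
qed

definition facet :: "nat \<Rightarrow> (nat \<Rightarrow> nat) \<Rightarrow> nat set" where
  "facet p f = (\<lambda>i. f i * p + i) ` {..<p}"

definition partite_complex :: "nat \<Rightarrow> nat \<Rightarrow> (nat \<Rightarrow> nat) set \<Rightarrow> nat set set" where
  "partite_complex p m E = (\<Union>e \<in> facet p ` E \<union> (\<lambda>v. {v}) ` {..<p * m}. Pow e)"

lemma encode_eq_iff:
  fixes x y i j p :: nat
  assumes "i < p" "j < p"
  shows "x * p + i = y * p + j \<longleftrightarrow> x = y \<and> i = j"
proof
  assume eq: "x * p + i = y * p + j"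
  have "i = (x * p + i) mod p" using assms(1) by simp
  also have "\<dots> = j" using eq assms(2) by simp
  finally have "i = j" .
  with eq assms(1) show "x = y \<and> i = j" by simp
qed simp

lemma in_facet_iff:
  assumes "i < p"
  shows "x * p + i \<in> facet p f \<longleftrightarrow> x = f i"
  using assms by (auto simp: facet_def encode_eq_iff)

lemma finite_facet: "finite (facet p f)"
  by (simp add: facet_def)

lemma card_facet: "card (facet p f) = p"
proof -
  have "inj_on (\<lambda>i. f i * p + i) {..<p}"
    by (auto intro!: inj_onI simp: encode_eq_iff)
  then show ?thesis by (simp add: facet_def card_image)
qed

lemma facet_inj:
  assumes "f \<in> grid p m" "g \<in> grid p m" "facet p f = facet p g"
  shows "f = g"
proof
  fix i show "f i = g i"
  proof (cases "i < p")
    case True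
    have "f i * p + i \<in> facet p g"
      using assms(3) in_facet_iff[OF True] by blast
    then show ?thesis using in_facet_iff[OF True] by blast
  next
    case False
    then show ?thesis using assms(1,2) grid_undefined by metis
  qed
qed

lemma facet_subset:
  assumes "f \<in> grid p m"
  shows "facet p f \<subseteq> {..<p * m}"
proof
  fix v assume "v \<in> facet p f"
  then obtain i where i: "i < p" "v = f i * p + i" by (auto simp: facet_def)
  have "f i < m" using assms i(1) by (auto simp: grid_def PiE_iff)
  then have "f i + 1 \<le> m" by simp
  then have "(f i + 1) * p \<le> m * p" by (rule mult_right_mono) simp
  then show "v \<in> {..<p * m}" using i by (simp add: algebra_simps)
qed

lemma simplicial_complex_Pow_Union:
  assumes "finite \<F>" "\<And>e. e \<in> \<F> \<Longrightarrow> finite e"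
  shows "simplicial_complex (\<Union>e\<in>\<F>. Pow e)"
  using assms by (auto simp: simplicial_complex_def intro: finite_subset)

lemma partite_complex_face_card:
  assumes "F \<in> partite_complex p m E" "p \<ge> 1"
  shows "card F \<le> p"
  using assms card_mono[OF finite_facet, of F p] card_mono[of "{_}" F] card_facet
  by (fastforce simp: partite_complex_def)

lemma partite_complex_p_faces:
  assumes "p \<ge> 2"
  shows "{F \<in> partite_complex p m E. card F = p} = facet p ` E"
proof
  show "facet p ` E \<subseteq> {F \<in> partite_complex p m E. card F = p}"
    by (auto simp: partite_complex_def card_facet)
  show "{F \<in> partite_complex p m E. card F = p} \<subseteq> facet p ` E"
  proof
    fix F assume "F \<in> {F \<in> partite_complex p m E. card F = p}"
    then have F: "F \<in> partite_complex p m E" "card F = p" by auto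
    then obtain e where e: "e \<in> facet p ` E \<union> (\<lambda>v. {v}) ` {..<p * m}" "F \<subseteq> e"
      by (auto simp: partite_complex_def)
    show "F \<in> facet p ` E"
    proof (cases "e \<in> facet p ` E")
      case True
      then obtain f where f: "f \<in> E" "e = facet p f" by auto
      then have "F = e"
        using card_subset_eq[OF finite_facet e(2)[unfolded f(2)]] F(2) by (simp add: card_facet)
      then show ?thesis using f by simp
    next
      case False
      then obtain v where "e = {v}" using e(1) by auto
      then have "card F \<le> 1" using e(2) card_mono[of "{v}" F] by simp
      then show ?thesis using F(2) assms by simp
    qed
  qed
qed

lemma partite_complex_properties:
  assumes E: "E \<subseteq> grid p m" "E \<noteq> {}" and p: "p \<ge> 2"
  shows "simplicial_complex (partite_complex p m E)"
    and "verts (partite_complex p m E) = {..<p * m}"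
    and "has_dim (partite_complex p m E) (p - 1)"
    and "num_faces (partite_complex p m E) p = card E"
proof -
  have "finite E" using E(1) finite_grid by (rule finite_subset)
  then show "simplicial_complex (partite_complex p m E)"
    unfolding partite_complex_def by (intro simplicial_complex_Pow_Union) (auto simp: finite_facet)
  show "verts (partite_complex p m E) = {..<p * m}"
    using facet_subset E(1) by (fastforce simp: verts_def partite_complex_def)
  obtain f where "f \<in> E" using E(2) by auto
  then have "facet p f \<in> partite_complex p m E" "card (facet p f) = p - 1 + 1"
    using p by (auto simp: partite_complex_def card_facet)
  then show "has_dim (partite_complex p m E) (p - 1)"
    using partite_complex_face_card p unfolding has_dim_def by fastforce
  have "inj_on (facet p) E"
    using E(1) facet_inj by (meson inj_onI subsetD)
  then show "num_faces (partite_complex p m E) p = card E"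
    unfolding num_faces_def partite_complex_p_faces[OF p] by (rule card_image)
qed

text \<open>Nonzero homology is witnessed by a cycle with a nonzero coefficient (the zero cycle is a
  boundary).\<close>

lemma red_homology_nonzero_cycle:
  fixes K :: "'k::field itself"
  assumes "red_homology_nonzero K \<Delta> j"
  obtains c :: "nat set \<Rightarrow> 'k" and H
  where "is_chain K \<Delta> j c" "\<forall>G. card G = j \<longrightarrow> bdry \<Delta> c G = 0" "c H \<noteq> 0"
proof -
  obtain c :: "nat set \<Rightarrow> 'k" where c: "is_chain K \<Delta> j c" "\<forall>G. card G = j \<longrightarrow> bdry \<Delta> c G = 0"
    and not_boundary: "\<not> (\<exists>b :: nat set \<Rightarrow> 'k. is_chain K \<Delta> (Suc j) b
                              \<and> (\<forall>G. card G = j + 1 \<longrightarrow> c G = bdry \<Delta> b G))"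
    using assms unfolding red_homology_nonzero_def by blast
  have "\<exists>H. c H \<noteq> 0"
  proof (rule ccontr)
    assume "\<nexists>H. c H \<noteq> 0"
    then have "is_chain K \<Delta> (Suc j) (\<lambda>_. 0) \<and> (\<forall>G. card G = j + 1 \<longrightarrow> c G = bdry \<Delta> (\<lambda>_. 0) G)"
      by (simp add: is_chain_def bdry_def)
    then show False using not_boundary by blast
  qed
  then show ?thesis using that c by blast
qed

text \<open>In any complex, if a face H carries a nonzero coefficient of a cycle, then every ridge
  H - {v} lies in a second face of the support: otherwise the boundary of the cycle at the ridge
  would be plus or minus c H.\<close>

lemma cycle_support_ridge:
  fixes c :: "nat set \<Rightarrow> 'k::field"
  assumes fin: "finite (verts \<Delta>)" and ch: "is_chain K \<Delta> j c"
    and cyc: "\<forall>G. card G = j \<longrightarrow> bdry \<Delta> c G = 0"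
    and H: "c H \<noteq> 0" and v: "v \<in> H"
  shows "\<exists>w. w \<notin> H \<and> c (insert w (H - {v})) \<noteq> 0"
proof (rule ccontr)
  assume none: "\<not> ?thesis"
  define G where "G = H - {v}"
  define N where "N = {w. w \<notin> G \<and> insert w G \<in> \<Delta>}"
  have H_face: "H \<in> \<Delta>" "card H = j + 1"
    using ch H by (auto simp: is_chain_def)
  then have "finite H" by (metis card.infinite add_is_0 one_neq_zero)
  then have card_G: "card G = j" and H_eq: "insert v G = H"
    using H_face(2) v by (auto simp: G_def)
  have "N \<subseteq> verts \<Delta>" by (auto simp: N_def verts_def)
  then have "finite N" using fin by (rule finite_subset)
  have "v \<in> N" using H_face H_eq by (auto simp: N_def G_def)
  have others: "c (insert w G) = 0" if "w \<in> N - {v}" for w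
    using none that H_eq by (auto simp: N_def G_def)
  have "bdry \<Delta> c G = (\<Sum>w\<in>N. (-1) ^ card {u \<in> G. u < w} * c (insert w G))"
    by (simp add: bdry_def N_def)
  also have "\<dots> = (-1) ^ card {u \<in> G. u < v} * c (insert v G)
                  + (\<Sum>w\<in>N - {v}. (-1) ^ card {u \<in> G. u < w} * c (insert w G))"
    using \<open>finite N\<close> \<open>v \<in> N\<close> by (rule sum.remove)
  also have "\<dots> = (-1) ^ card {u \<in> G. u < v} * c H"
    using others H_eq by simp
  finally have "bdry \<Delta> c G \<noteq> 0" using H by simp
  then show False using cyc card_G by blast
qed

lemma verts_induced: "verts (induced \<Gamma> W) \<subseteq> W"
  by (auto simp: verts_def induced_def)

text \<open>In the partite complex the second face through the ridge of colour i is the facet of a grid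
  point differing from f exactly in coordinate i: the support of a (p-1)-cycle is closed under
  such flips.\<close>

lemma cycle_support_flip:
  fixes c :: "nat set \<Rightarrow> 'k::field"
  assumes E: "E \<subseteq> grid p m" and p: "p \<ge> 2" and W: "finite W"
    and ch: "is_chain K (induced (partite_complex p m E) W) (p - 1) c"
    and cyc: "\<forall>G. card G = p - 1 \<longrightarrow> bdry (induced (partite_complex p m E) W) c G = 0"
    and f: "f \<in> E" "c (facet p f) \<noteq> 0" and i: "i < p"
  shows "\<exists>g\<in>E. c (facet p g) \<noteq> 0 \<and> g i \<noteq> f i \<and> (\<forall>j. j \<noteq> i \<longrightarrow> g j = f j)"
proof -
  let ?v = "f i * p + i"
  have "?v \<in> facet p f" using in_facet_iff[OF i] by blast
  moreover have "finite (verts (induced (partite_complex p m E) W))"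
    using verts_induced W by (rule finite_subset)
  ultimately obtain w where w: "w \<notin> facet p f" and nz: "c (insert w (facet p f - {?v})) \<noteq> 0"
    using cycle_support_ridge[OF _ ch cyc f(2)] by blast
  then have "insert w (facet p f - {?v}) \<in> {F \<in> partite_complex p m E. card F = p}"
    using ch p by (auto simp: is_chain_def induced_def)
  then obtain g where g: "g \<in> E" "insert w (facet p f - {?v}) = facet p g"
    unfolding partite_complex_p_faces[OF p] by blast
  have agree: "g j = f j" if "j \<noteq> i" for j
  proof (cases "j < p")
    case True
    have "f j * p + j \<in> facet p f - {?v}"
      using in_facet_iff[OF True] that True i by (auto simp: encode_eq_iff)
    then have "f j * p + j \<in> facet p g" using g(2) by blast
    then show ?thesis using in_facet_iff[OF True] by simp
  next
    case False
    then show ?thesis using f(1) g(1) E grid_undefined by (metis subsetD)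
  qed
  have "g i \<noteq> f i"
  proof
    assume "g i = f i"
    then have "g = f" using agree by (metis ext)
    then show False using g(2) w by blast
  qed
  then show ?thesis using g nz agree by auto
qed

text \<open>A nonempty subset of a box closed under flips is the whole box (induction on the
  Hamming distance to a fixed point of the subset).\<close>

lemma flip_closed_fills_box:
  assumes S: "S \<subseteq> box p a b" "f0 \<in> S"
    and flip: "\<And>f i. f \<in> S \<Longrightarrow> i < p \<Longrightarrow> \<exists>g\<in>S. g i \<noteq> f i \<and> (\<forall>j. j \<noteq> i \<longrightarrow> g j = f j)"
  shows "box p a b \<subseteq> S"
proof -
  define D where "D g = {i\<in>{..<p}. g i \<noteq> f0 i}" for g
  have f0_box: "f0 \<in> box p a b" using S by auto
  have at_f0: "g = f0" if "g \<in> box p a b" "D g = {}" for g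
  proof
    fix i show "g i = f0 i"
      using that f0_box by (cases "i < p") (auto simp: D_def box_def PiE_def extensional_def)
  qed
  have reach: "g \<in> S" if "g \<in> box p a b" "card (D g) \<le> n" for g n
    using that
  proof (induction n arbitrary: g)
    case 0
    then have "D g = {}" by (simp add: D_def)
    then have "g = f0" using at_f0 "0.prems"(1) by blast
    then show ?case using S by simp
  next
    case (Suc n)
    show ?case
    proof (cases "D g = {}")
      case True
      then show ?thesis using at_f0[OF Suc.prems(1)] S by blast
    next
      case False
      then obtain i where i: "i < p" "g i \<noteq> f0 i" by (auto simp: D_def)
      define g' where "g' = g(i := f0 i)"
      have "g' \<in> box p a b"
        using Suc.prems(1) f0_box i by (auto simp: box_def PiE_iff g'_def extensional_def)
      moreover have "D g' = D g - {i}" by (auto simp: D_def g'_def)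
      then have "card (D g') \<le> n" using Suc.prems(2) i by (simp add: D_def)
      ultimately have "g' \<in> S" by (rule Suc.IH)
      then obtain h where h: "h \<in> S" "h i \<noteq> f0 i" "\<forall>j. j \<noteq> i \<longrightarrow> h j = g j"
        using flip[OF _ i(1)] by (fastforce simp: g'_def)
      have "h i \<in> {a i, b i}" "g i \<in> {a i, b i}" "f0 i \<in> {a i, b i}"
        using S h(1) Suc.prems(1) f0_box i(1) by (auto simp: box_def PiE_iff)
      then have "h i = g i" using h(2) i(2) by auto
      then have "h = g" using h(3) by (metis ext)
      then show ?thesis using h(1) by simp
    qed
  qed
  show ?thesis
  proof
    fix g assume g: "g \<in> box p a b"
    have "card (D g) \<le> card {..<p}" by (rule card_mono) (auto simp: D_def)
    then show "g \<in> S" using reach[OF g] by simp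
  qed
qed

text \<open>A nonempty flip-closed set of grid points whose facets use at most 2p vertices lies in a
  box: flipping a point in every coordinate already produces 2p distinct vertices, and these
  are then all the vertices available.\<close>

lemma small_flip_closed_in_box:
  assumes S: "S \<subseteq> grid p m" "f0 \<in> S"
    and flip: "\<And>f i. f \<in> S \<Longrightarrow> i < p \<Longrightarrow> \<exists>g\<in>S. g i \<noteq> f i \<and> (\<forall>j. j \<noteq> i \<longrightarrow> g j = f j)"
    and W: "\<And>f. f \<in> S \<Longrightarrow> facet p f \<subseteq> W" "finite W" "card W \<le> 2 * p"
  shows "\<exists>(a, b)\<in>box_corners p m. S \<subseteq> box p a b"
proof -
  obtain h where h: "\<And>i. i < p \<Longrightarrow> h i \<in> S \<and> h i i \<noteq> f0 i"
    using flip[OF S(2)] by metis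
  define a where "a i = (if i < p then min (f0 i) (h i i) else undefined)" for i
  define b where "b i = (if i < p then max (f0 i) (h i i) else undefined)" for i
  have ab_vals: "{a i, b i} = {f0 i, h i i}" "a i < b i" if "i < p" for i
    using h[OF that] that by (auto simp: a_def b_def)
  have grid_vals: "f0 i < m" "h i i < m" if "i < p" for i
    using S h[OF that] that by (auto simp: grid_def PiE_iff)
  have corners: "(a, b) \<in> box_corners p m"
    using ab_vals grid_vals
    by (auto simp: box_corners_def grid_def PiE_iff a_def b_def extensional_def min_def max_def)
  have disjoint: "facet p a \<inter> facet p b = {}"
  proof -
    have "a i \<noteq> b i" if "i < p" for i using ab_vals(2)[OF that] by simp
    then show ?thesis by (auto simp: facet_def encode_eq_iff)
  qed
  have "facet p a \<union> facet p b \<subseteq> W"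
  proof
    fix v assume "v \<in> facet p a \<union> facet p b"
    then obtain i where i: "i < p" "v = a i * p + i \<or> v = b i * p + i"
      by (auto simp: facet_def)
    then have "v = f0 i * p + i \<or> v = h i i * p + i"
      using ab_vals(1)[OF i(1)] by (auto simp: doubleton_eq_iff)
    then show "v \<in> W"
      using W(1)[OF S(2)] W(1) h[OF i(1)] in_facet_iff[OF i(1)] by blast
  qed
  moreover have "card (facet p a \<union> facet p b) = 2 * p"
    using card_Un_disjoint[OF finite_facet finite_facet disjoint] by (simp add: card_facet)
  ultimately have W_eq: "W = facet p a \<union> facet p b"
    using card_seteq[OF W(2)] W(3) by metis
  have "S \<subseteq> box p a b"
  proof
    fix f assume f: "f \<in> S"
    have "f i \<in> {a i, b i}" if i: "i < p" for i
    proof -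
      have "f i * p + i \<in> facet p a \<union> facet p b"
        using W(1)[OF f] W_eq in_facet_iff[OF i] by blast
      then show ?thesis using in_facet_iff[OF i] by auto
    qed
    moreover have "f \<in> extensional {..<p}" using f S by (auto simp: grid_def PiE_def)
    ultimately show "f \<in> box p a b" by (auto simp: box_def PiE_iff)
  qed
  then show ?thesis using corners by blast
qed

text \<open>Key step: on at most 2p vertices the partite complex of a box-free set has no nonzero
  (p-1)-cycle, since the support of such a cycle would fill a box inside E.\<close>

lemma small_cycles_vanish:
  fixes c :: "nat set \<Rightarrow> 'k::field"
  assumes E: "E \<subseteq> grid p m" and p: "p \<ge> 2"
    and box_free: "\<forall>(a, b)\<in>box_corners p m. \<not> box p a b \<subseteq> E"
    and W: "finite W" "card W \<le> 2 * p"
    and ch: "is_chain K (induced (partite_complex p m E) W) (p - 1) c"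
    and cyc: "\<forall>G. card G = p - 1 \<longrightarrow> bdry (induced (partite_complex p m E) W) c G = 0"
  shows "c H = 0"
proof (rule ccontr)
  assume H: "c H \<noteq> 0"
  then have "H \<in> {F \<in> partite_complex p m E. card F = p}"
    using ch p by (auto simp: is_chain_def induced_def)
  then obtain f0 where f0: "f0 \<in> E" "H = facet p f0"
    unfolding partite_complex_p_faces[OF p] by blast
  define S where "S = {f \<in> E. c (facet p f) \<noteq> 0}"
  have "f0 \<in> S" using f0 H by (simp add: S_def)
  have flip: "\<exists>g\<in>S. g i \<noteq> f i \<and> (\<forall>j. j \<noteq> i \<longrightarrow> g j = f j)" if "f \<in> S" "i < p" for f i
    using cycle_support_flip[OF E p W(1) ch cyc, of f i] that by (auto simp: S_def)
  have "S \<subseteq> grid p m" using E by (auto simp: S_def)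
  moreover have "facet p f \<subseteq> W" if "f \<in> S" for f
    using ch that p by (auto simp: S_def is_chain_def induced_def)
  ultimately obtain a b where ab: "(a, b) \<in> box_corners p m" "S \<subseteq> box p a b"
    using small_flip_closed_in_box[OF _ \<open>f0 \<in> S\<close> flip _ W] by blast
  have "box p a b \<subseteq> S"
    using flip_closed_fills_box[OF ab(2) \<open>f0 \<in> S\<close> flip] by blast
  then have "box p a b \<subseteq> E" by (auto simp: S_def)
  then show False using box_free ab(1) by blast
qed

lemma link_faces_smaller:
  assumes "\<forall>G\<in>\<Gamma>. finite G \<and> card G \<le> d" "F \<noteq> {}" "H \<in> link \<Gamma> F"
  shows "card H < d"
proof -
  obtain G where G: "G \<in> \<Gamma>" "F \<subseteq> G" "H = G - F"
    using assms(3) by (auto simp: link_def)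
  have G_fin: "finite G" "card G \<le> d" using assms(1) G(1) by auto
  then have "finite F" using G(2) by (blast intro: finite_subset)
  then have "0 < card F" using assms(2) by (simp add: card_gt_0_iff)
  moreover have "card F \<le> card G" using G_fin(1) G(2) by (rule card_mono)
  moreover have "card H = card G - card F" using G(2,3) \<open>finite F\<close> by (simp add: card_Diff_subset)
  ultimately show ?thesis using G_fin(2) by linarith
qed

lemma girth_greater:
  assumes "\<And>W F. W \<subseteq> verts \<Gamma> \<Longrightarrow> F \<in> \<Gamma> \<Longrightarrow>
             red_homology_nonzero K (induced (link \<Gamma> F) W) j \<Longrightarrow> d < card W"
  shows "enat d < girth K \<Gamma> j"
proof (cases "\<exists>W. W \<subseteq> verts \<Gamma> \<and> (\<exists>F\<in>\<Gamma>. red_homology_nonzero K (induced (link \<Gamma> F) W) j)")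
  case True
  define P where "P k \<longleftrightarrow> (\<exists>W. W \<subseteq> verts \<Gamma> \<and> card W = k \<and>
                   (\<exists>F\<in>\<Gamma>. red_homology_nonzero K (induced (link \<Gamma> F) W) j))" for k
  have "\<exists>k. P k" using True by (auto simp: P_def)
  then have "P (LEAST k. P k)" by (rule LeastI_ex)
  then obtain W F where "W \<subseteq> verts \<Gamma>" "F \<in> \<Gamma>" "card W = (LEAST k. P k)"
      "red_homology_nonzero K (induced (link \<Gamma> F) W) j"
    unfolding P_def by blast
  then have "d < (LEAST k. P k)" using assms by metis
  then show ?thesis using True unfolding girth_def P_def by simp
next
  case False
  then have "girth K \<Gamma> j = \<infinity>" unfolding girth_def by (simp only: if_False)
  then show ?thesis by simp
qed

text \<open>The partite complex of a nonempty box-free set has (p-1)-girth greater than 2p. Links of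
  nonempty faces have no (p-1)-faces, and the empty face is handled by the key step.\<close>

lemma partite_complex_girth:
  fixes K :: "'k::field itself"
  assumes E: "E \<subseteq> grid p m" "E \<noteq> {}" and p: "p \<ge> 2"
    and box_free: "\<forall>(a, b)\<in>box_corners p m. \<not> box p a b \<subseteq> E"
  shows "enat (2 * p) < girth K (partite_complex p m E) (p - 1)"
proof (rule girth_greater)
  let ?\<Gamma> = "partite_complex p m E"
  fix W F
  assume W: "W \<subseteq> verts ?\<Gamma>" and F: "F \<in> ?\<Gamma>"
    and hom: "red_homology_nonzero K (induced (link ?\<Gamma> F) W) (p - 1)"
  obtain c :: "nat set \<Rightarrow> 'k" and H where ch: "is_chain K (induced (link ?\<Gamma> F) W) (p - 1) c"
    and cyc: "\<forall>G. card G = p - 1 \<longrightarrow> bdry (induced (link ?\<Gamma> F) W) c G = 0" and H: "c H \<noteq> 0"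
    by (rule red_homology_nonzero_cycle[OF hom])
  have H_face: "H \<in> link ?\<Gamma> F" "card H = p"
    using ch H p by (auto simp: is_chain_def induced_def)
  show "2 * p < card W"
  proof (rule ccontr)
    assume "\<not> 2 * p < card W"
    moreover have "finite W"
      using W partite_complex_properties(2)[OF E p] finite_subset by auto
    moreover have "F = {}"
    proof (rule ccontr)
      assume "F \<noteq> {}"
      have "\<forall>G\<in>?\<Gamma>. finite G \<and> card G \<le> p"
        using partite_complex_properties(1)[OF E p] partite_complex_face_card p
        by (auto simp: simplicial_complex_def)
      then show False using link_faces_smaller[of ?\<Gamma> p F H, OF _ \<open>F \<noteq> {}\<close> H_face(1)] H_face(2) by simp
    qed
    moreover have "link ?\<Gamma> {} = ?\<Gamma>" by (auto simp: link_def)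
    ultimately show False
      using small_cycles_vanish[OF E(1) p box_free, of W K c H] ch cyc H by simp
  qed
qed

lemma box_free_partite_complex_exists:
  fixes q :: real and K :: "'k::field itself"
  assumes p: "p \<ge> 2" and q: "0 \<le> q" "q \<le> 1"
    and pos: "0 < q * real m ^ p - real m ^ (2 * p) * q ^ (2 ^ p)"
  shows "\<exists>\<Gamma>. simplicial_complex \<Gamma> \<and> has_dim \<Gamma> (p - 1) \<and> card (verts \<Gamma>) = p * m
           \<and> enat (2 * p) < girth K \<Gamma> (p - 1)
           \<and> q * real m ^ p - real m ^ (2 * p) * q ^ (2 ^ p) \<le> real (num_faces \<Gamma> p)"
proof -
  obtain E where E: "E \<subseteq> grid p m" "\<forall>(a, b)\<in>box_corners p m. \<not> box p a b \<subseteq> E"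
    and big: "q * real m ^ p - real m ^ (2 * p) * q ^ (2 ^ p) \<le> real (card E)"
    using box_free_subset_exists[OF q] by blast
  have "E \<noteq> {}" using big pos by auto
  note props = partite_complex_properties[OF E(1) this p]
  show ?thesis
    using props partite_complex_girth[OF E(1) \<open>E \<noteq> {}\<close> p E(2)] big
    by (intro exI[of _ "partite_complex p m E"]) simp
qed

text \<open>With m = t^(2^p-1) and q = 1/(2 t^p) the deletions cost at most half of the expected
  size, leaving at least m^p/(4 t^p) facets.\<close>

lemma alteration_bound_estimate:
  fixes t p k :: nat and q :: real
  assumes t: "t \<ge> 1" and k: "k = 2 ^ p - 1" and p: "p \<ge> 2" and q: "q = 1 / (2 * real t ^ p)"
  shows "real (t ^ k) ^ p / (4 * real t ^ p)
           \<le> q * real (t ^ k) ^ p - real (t ^ k) ^ (2 * p) * q ^ (2 ^ p)"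
proof -
  define T where "T = real t"
  define M where "M = real (t ^ k)"
  have T: "T \<ge> 1" using t by (simp add: T_def)
  have "(2::nat) ^ 2 \<le> 2 ^ p" using p by (intro power_increasing) auto
  then have k1: "k \<ge> 1" using k by simp
  have Mp: "M ^ p = T ^ (p * k)" by (simp add: M_def T_def power_mult[symmetric] mult.commute)
  have "q ^ k = 1 / (2 ^ k * T ^ (p * k))"
    by (simp add: q T_def power_divide power_mult_distrib power_mult)
  then have qkM: "q ^ k * M ^ p = 1 / 2 ^ k" using Mp T by simp
  have "(2::nat) ^ p = Suc k" using k by simp
  then have "M ^ (2 * p) * q ^ (2 ^ p) = q * M ^ p * (q ^ k * M ^ p)"
    by (simp add: mult_2 power_add)
  also have "\<dots> = q * M ^ p / 2 ^ k" using qkM by simp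
  also have "\<dots> \<le> q * M ^ p / 2"
  proof -
    have "(2::real) ^ 1 \<le> 2 ^ k" using k1 by (intro power_increasing) auto
    moreover have "q * M ^ p \<ge> 0" using T by (simp add: q M_def)
    ultimately show ?thesis by (intro divide_left_mono) auto
  qed
  finally have "q * M ^ p / 2 \<le> q * M ^ p - M ^ (2 * p) * q ^ (2 ^ p)" by simp
  moreover have "q * M ^ p / 2 = M ^ p / (4 * T ^ p)" by (simp add: q T_def)
  ultimately show ?thesis by (simp add: M_def T_def)
qed

text \<open>The facet count m^p/(4 t^p) dominates C n^(p - p/(2^p-1)) for n = p*m and C = 1/(4 p^p),
  since m^(p/(2^p-1)) = t^p.\<close>

lemma face_count_exponent_estimate:
  fixes t p k :: nat
  assumes t: "t \<ge> 1" and k: "k = 2 ^ p - 1" and p: "p \<ge> 2"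
  shows "1 / (4 * real p ^ p) * real (p * t ^ k) powr (real p - real p / (2 ^ p - 1))
           \<le> real (t ^ k) ^ p / (4 * real t ^ p)"
proof -
  define e where "e = real p - real p / (2 ^ p - 1)"
  have kr: "(2::real) ^ p - 1 = real k" using k by (simp add: of_nat_diff)
  have "(2::nat) ^ 2 \<le> 2 ^ p" using p by (intro power_increasing) auto
  then have k1: "k \<ge> 1" using k by simp
  have T: "real t \<ge> 1" using t by simp
  have split: "real (p * t ^ k) powr e = real p powr e * real (t ^ k) powr e"
    by (simp add: powr_mult)
  have p_part: "real p powr e \<le> real p ^ p"
  proof -
    have "real p powr e \<le> real p powr real p" using p by (intro powr_mono) (auto simp: e_def kr)
    also have "\<dots> = real p ^ p" using p by (simp add: powr_realpow)
    finally show ?thesis .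
  qed
  have t_part: "real (t ^ k) powr e = real (t ^ k) ^ p / real t ^ p"
  proof -
    have "real (t ^ k) = real t powr real k" using T by (simp add: powr_realpow)
    then have "real (t ^ k) powr e = real t powr (real k * e)" by (simp add: powr_powr)
    also have "real k * e = real (k * p - p)"
      using k1 by (simp add: e_def kr of_nat_diff algebra_simps)
    also have "real t powr real (k * p - p) = real t ^ (k * p - p)" using T by (simp add: powr_realpow)
    also have "\<dots> = real (t ^ k) ^ p / real t ^ p"
    proof -
      have "k * p - p + p = k * p" using k1 by simp
      then have "real t ^ (k * p - p) * real t ^ p = real (t ^ k) ^ p"
        by (metis of_nat_power power_add power_mult)
      then show ?thesis using T by (simp add: field_simps)
    qed
    finally show ?thesis .
  qed
  have "real (p * t ^ k) powr e \<le> real p ^ p * (real (t ^ k) ^ p / real t ^ p)"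
    unfolding split t_part using p_part by (intro mult_right_mono) auto
  then show ?thesis unfolding e_def[symmetric] using p by (simp add: field_simps)
qed

theorem mainTheorem15:
  fixes p :: nat
  assumes "p \<ge> 2"
  shows "\<exists>C::real. C > 0 \<and> (\<forall>N::nat. \<exists>n::nat. n \<ge> N \<and> n > 0 \<and>
           (\<exists>\<Gamma>. simplicial_complex \<Gamma> \<and> has_dim \<Gamma> (p - 1) \<and> card (verts \<Gamma>) = n
              \<and> girth TYPE('k::field) \<Gamma> (p - 1) > enat (2 * p)
              \<and> real (num_faces \<Gamma> p) \<ge> C * real n powr (real p - real p / (2 ^ p - 1))))"
proof (intro exI[of _ "1 / (4 * real p ^ p)"] conjI allI)
  show "1 / (4 * real p ^ p) > 0" using assms by simp
  fix N :: nat
  define t where "t = Suc N"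
  define k :: nat where "k = 2 ^ p - 1"
  define q :: real where "q = 1 / (2 * real t ^ p)"
  let ?m = "t ^ k"
  have "t \<ge> 1" by (simp add: t_def)
  have "(2::nat) ^ 2 \<le> 2 ^ p" using assms by (intro power_increasing) auto
  then have "t \<le> ?m" using \<open>t \<ge> 1\<close> by (simp add: k_def self_le_power)
  moreover have "?m \<le> p * ?m" using assms by simp
  ultimately have "N < p * ?m" unfolding t_def by linarith
  have "1 \<le> real t ^ p" using \<open>t \<ge> 1\<close> by (simp add: one_le_power)
  then have q: "0 \<le> q" "q \<le> 1" unfolding q_def by (auto simp: divide_le_eq)
  note estimate = alteration_bound_estimate[OF \<open>t \<ge> 1\<close> k_def assms q_def]
  have "0 < real ?m ^ p / (4 * real t ^ p)" using \<open>t \<ge> 1\<close> by simp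
  then have "0 < q * real ?m ^ p - real ?m ^ (2 * p) * q ^ (2 ^ p)" using estimate by linarith
  then obtain \<Gamma> where \<Gamma>: "simplicial_complex \<Gamma>" "has_dim \<Gamma> (p - 1)" "card (verts \<Gamma>) = p * ?m"
      "enat (2 * p) < girth TYPE('k) \<Gamma> (p - 1)"
      and faces: "q * real ?m ^ p - real ?m ^ (2 * p) * q ^ (2 ^ p) \<le> real (num_faces \<Gamma> p)"
    using box_free_partite_complex_exists[OF assms q, where K = "TYPE('k)"] by blast
  have "1 / (4 * real p ^ p) * real (p * ?m) powr (real p - real p / (2 ^ p - 1)) \<le> real (num_faces \<Gamma> p)"
    using face_count_exponent_estimate[OF \<open>t \<ge> 1\<close> k_def assms] estimate faces by linarith
  then show "\<exists>n\<ge>N. 0 < n \<and> (\<exists>\<Gamma>. simplicial_complex \<Gamma> \<and> has_dim \<Gamma> (p - 1)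
      \<and> card (verts \<Gamma>) = n \<and> enat (2 * p) < girth TYPE('k) \<Gamma> (p - 1)
      \<and> 1 / (4 * real p ^ p) * real n powr (real p - real p / (2 ^ p - 1)) \<le> real (num_faces \<Gamma> p))"
    using \<Gamma> \<open>N < p * ?m\<close> assms \<open>t \<ge> 1\<close> by (intro exI[of _ "p * ?m"]) auto
qed

end
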